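(* Let $G=(V,E)$ be a finite planar embedded graph, $\mathbf{p}$ a packing of $G$, $V=V^+\sqcup V^-\sqcup V^=\sqcup V^0$ a partition, and $\mathbf{p}'$ a proper infinitesimal flex of $\mathbf{p}$, with associated modified partition $V=\tilde V^+\sqcup\tilde V^-\sqcup\tilde V^=\sqcup\tilde V^0$. Suppose there exists an equilibrium stress $\omega$ on $(G,\mathbf{p})$ whose radial force sum $\omega_i=\sum_{j:(i,j)\in E}\omega_{ij}(r_i+r_j)$ is $\ge 0$ for $i\in\tilde V^-$, $\le 0$ for $i\in\tilde V^+$, $=0$ for $i\in\tilde V^0$, and such that $$\sum_{(i,j)\in E}\omega_{ij}\big[(\mathbf{p}_i'-\mathbf{p}_j')\cdot(\mathbf{p}_i'-\mathbf{p}_j')-(r_i'+r_j')^2\big]>0.$$ Then $\mathbf{p}'$ is not extendable.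
   Context: A packing of $G=(V,E)$, $V=\{1,\dots,n\}$, is $\mathbf{p}=(x_1,y_1,r_1,\dots,x_n,y_n,r_n)\in\mathbb{R}^{3n}$, all $r_i>0$, with $(r_i+r_j)^2=(x_i-x_j)^2+(y_i-y_j)^2$ for all $(i,j)\in E$ and the neighbors of each vertex in the same counterclockwise order as in the embedding; $\mathbf{p}_i=(x_i,y_i)$. The partition: $V^+$ (radius may increase or stay), $V^-$ (may decrease or stay), $V^=$ (fixed), $V^0$ (free). An infinitesimal flex is $\mathbf{p}'=(x_1',y_1',r_1',\dots)$ with $(\mathbf{p}_i-\mathbf{p}_j)\cdot(\mathbf{p}_i'-\mathbf{p}_j')=(r_i+r_j)(r_i'+r_j')$ for all edges; proper if $r_i'\ge 0$ on $V^+$, $\le 0$ on $V^-$, $=0$ on $V^=$. Given a proper $\mathbf{p}'$, the modified partition is obtained by moving every $i\in V^+$ with $r_i'>0$ and every $i\in V^-$ with $r_i'<0$ into $V^0$: $\tilde V^+=\{i\in V^+:r_i'=0\}$, $\tilde V^-=\{i\in V^-:r_i'=0\}$, $\tilde V^==V^=$, and $\tilde V^0$ the rest. $\mathbf{p}'$ is extendable if there is $\mathbf{p}''\in\mathbb{R}^{3n}$ with, for every $(i,j)\in E$, $(\mathbf{p}_i-\mathbf{p}_j)\cdot(\mathbf{p}_i''-\mathbf{p}_j'')-(r_i+r_j)(r_i''+r_j'')=(r_i'+r_j')^2-(\mathbf{p}_i'-\mathbf{p}_j')\cdot(\mathbf{p}_i'-\mathbf{p}_j')$, and $r_i''\ge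 0$ on $\tilde V^+$, $r_i''\le0$ on $\tilde V^-$, $r_i''=0$ on $\tilde V^=$. A stress is $\omega:E\to\mathbb{R}$; it is an equilibrium stress if $\sum_{j:(i,j)\in E}\omega_{ij}(\mathbf{p}_i-\mathbf{p}_j)=0$ for every $i$. *)

theory Defs
  imports Complex_Main
begin

text \<open>Vertices are 1..n. The edge set E is a set of ordered pairs,
each undirected edge listed exactly once (in an arbitrary orientation), without loops.
A stress is a function on E (given as omega :: nat \<times> nat \<Rightarrow> real, only its values on E matter);
omega_ij = omega_ji is the value on the edge {i,j}.\<close>

definition simple_graph :: "nat \<Rightarrow> (nat \<times> nat) set \<Rightarrow> bool" where
  "simple_graph n E \<longleftrightarrow> E \<subseteq> {1..n} \<times> {1..n} \<and> (\<forall>(i,j)\<in>E. i \<noteq> j \<and> (j,i) \<notin> E)"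

definition nbrs :: "(nat \<times> nat) set \<Rightarrow> nat \<Rightarrow> nat set" where
  "nbrs E i = {j. (i,j) \<in> E \<or> (j,i) \<in> E}"

definition wt :: "(nat \<times> nat) set \<Rightarrow> (nat \<times> nat \<Rightarrow> real) \<Rightarrow> nat \<Rightarrow> nat \<Rightarrow> real" where
  "wt E \<omega> i j = (if (i,j) \<in> E then \<omega> (i,j) else \<omega> (j,i))"

text \<open>Combinatorial embedding: a rotation system, rot i = cyclic counterclockwise list of neighbours of i.\<close>
definition cyc_next :: "nat list \<Rightarrow> nat \<Rightarrow> nat" where
  "cyc_next xs a = (THE b. (a,b) \<in> set (zip xs (rotate1 xs)))"

definition darts :: "(nat \<times> nat) set \<Rightarrow> (nat \<times> nat) set" where
  "darts E = {(i,j). (i,j) \<in> E \<or> (j,i) \<in> E}"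

definition face_step :: "(nat \<Rightarrow> nat list) \<Rightarrow> nat \<times> nat \<Rightarrow> nat \<times> nat" where
  "face_step rot d = (snd d, cyc_next (rot (snd d)) (fst d))"

definition num_faces :: "(nat \<times> nat) set \<Rightarrow> (nat \<Rightarrow> nat list) \<Rightarrow> nat" where
  "num_faces E rot = card (darts E // {(d,e). d \<in> darts E \<and> e \<in> darts E \<and> (\<exists>k. (face_step rot ^^ k) d = e)})"

definition num_components :: "nat \<Rightarrow> (nat \<times> nat) set \<Rightarrow> nat" where
  "num_components n E = card ({1..n} // {(i,j). i \<in> {1..n} \<and> j \<in> {1..n} \<and> (i,j) \<in> (darts E)\<^sup>*})"

definition num_isolated :: "nat \<Rightarrow> (nat \<times> nat) set \<Rightarrow> nat" where
  "num_isolated n E = card {i \<in> {1..n}. nbrs E i = {}}"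

text \<open>A planar embedded graph: simple graph on 1..n with a rotation system of genus 0
(Euler's formula V - E + F = 2 for every component with at least one edge, faces being the
orbits of the face-tracing permutation on darts).\<close>
definition planar_embedded :: "nat \<Rightarrow> (nat \<times> nat) set \<Rightarrow> (nat \<Rightarrow> nat list) \<Rightarrow> bool" where
  "planar_embedded n E rot \<longleftrightarrow> simple_graph n E \<and>
     (\<forall>i\<in>{1..n}. distinct (rot i) \<and> set (rot i) = nbrs E i) \<and>
     int n - int (card E) + int (num_faces E rot)
       = 2 * int (num_components n E) - int (num_isolated n E)"

text \<open>counterclockwise turning angle from direction u to direction v, in (0, 2 pi]\<close>
definition ccw_angle :: "complex \<Rightarrow> complex \<Rightarrow> real" where
  "ccw_angle u v = (let t = Arg (v / u) in if t \<le> 0 then t + 2 * pi else t)"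

text \<open>The neighbours listed in xs appear around centre c in counterclockwise cyclic order
(consecutive turning angles sum to exactly one full turn).\<close>
definition ccw_order :: "(nat \<Rightarrow> complex) \<Rightarrow> nat \<Rightarrow> nat list \<Rightarrow> bool" where
  "ccw_order c i xs \<longleftrightarrow> xs = [] \<or>
     (\<Sum>(a,b)\<leftarrow>zip xs (rotate1 xs). ccw_angle (c a - c i) (c b - c i)) = 2 * pi"

definition is_packing :: "nat \<Rightarrow> (nat \<times> nat) set \<Rightarrow> (nat \<Rightarrow> nat list)
    \<Rightarrow> (nat \<Rightarrow> real) \<Rightarrow> (nat \<Rightarrow> real) \<Rightarrow> (nat \<Rightarrow> real) \<Rightarrow> bool" where
  "is_packing n E rot x y r \<longleftrightarrow>
     (\<forall>i\<in>{1..n}. r i > 0) \<and>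
     (\<forall>(i,j)\<in>E. (r i + r j)^2 = (x i - x j)^2 + (y i - y j)^2) \<and>
     (\<forall>i\<in>{1..n}. ccw_order (\<lambda>k. Complex (x k) (y k)) i (rot i))"

definition is_partition :: "nat \<Rightarrow> nat set \<Rightarrow> nat set \<Rightarrow> nat set \<Rightarrow> nat set \<Rightarrow> bool" where
  "is_partition n Vp Vm Veq V0 \<longleftrightarrow> Vp \<union> Vm \<union> Veq \<union> V0 = {1..n} \<and>
     Vp \<inter> Vm = {} \<and> Vp \<inter> Veq = {} \<and> Vp \<inter> V0 = {} \<and>
     Vm \<inter> Veq = {} \<and> Vm \<inter> V0 = {} \<and> Veq \<inter> V0 = {}"

definition inf_flex :: "(nat \<times> nat) set \<Rightarrow> (nat \<Rightarrow> real) \<Rightarrow> (nat \<Rightarrow> real) \<Rightarrow> (nat \<Rightarrow> real)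
    \<Rightarrow> (nat \<Rightarrow> real) \<Rightarrow> (nat \<Rightarrow> real) \<Rightarrow> (nat \<Rightarrow> real) \<Rightarrow> bool" where
  "inf_flex E x y r x' y' r' \<longleftrightarrow>
     (\<forall>(i,j)\<in>E. (x i - x j) * (x' i - x' j) + (y i - y j) * (y' i - y' j)
                 = (r i + r j) * (r' i + r' j))"

definition proper_flex :: "(nat \<times> nat) set \<Rightarrow> nat set \<Rightarrow> nat set \<Rightarrow> nat set
    \<Rightarrow> (nat \<Rightarrow> real) \<Rightarrow> (nat \<Rightarrow> real) \<Rightarrow> (nat \<Rightarrow> real)
    \<Rightarrow> (nat \<Rightarrow> real) \<Rightarrow> (nat \<Rightarrow> real) \<Rightarrow> (nat \<Rightarrow> real) \<Rightarrow> bool" where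
  "proper_flex E Vp Vm Veq x y r x' y' r' \<longleftrightarrow> inf_flex E x y r x' y' r' \<and>
     (\<forall>i\<in>Vp. r' i \<ge> 0) \<and> (\<forall>i\<in>Vm. r' i \<le> 0) \<and> (\<forall>i\<in>Veq. r' i = 0)"

definition mod_Vp :: "nat set \<Rightarrow> (nat \<Rightarrow> real) \<Rightarrow> nat set" where
  "mod_Vp Vp r' = {i \<in> Vp. r' i = 0}"
definition mod_Vm :: "nat set \<Rightarrow> (nat \<Rightarrow> real) \<Rightarrow> nat set" where
  "mod_Vm Vm r' = {i \<in> Vm. r' i = 0}"
definition mod_Veq :: "nat set \<Rightarrow> nat set" where
  "mod_Veq Veq = Veq"
definition mod_V0 :: "nat \<Rightarrow> nat set \<Rightarrow> nat set \<Rightarrow> nat set \<Rightarrow> (nat \<Rightarrow> real) \<Rightarrow> nat set" where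
  "mod_V0 n Vp Vm Veq r' = {1..n} - (mod_Vp Vp r' \<union> mod_Vm Vm r' \<union> mod_Veq Veq)"

definition extendable :: "(nat \<times> nat) set \<Rightarrow> nat set \<Rightarrow> nat set \<Rightarrow> nat set
    \<Rightarrow> (nat \<Rightarrow> real) \<Rightarrow> (nat \<Rightarrow> real) \<Rightarrow> (nat \<Rightarrow> real)
    \<Rightarrow> (nat \<Rightarrow> real) \<Rightarrow> (nat \<Rightarrow> real) \<Rightarrow> (nat \<Rightarrow> real) \<Rightarrow> bool" where
  "extendable E Vp Vm Veq x y r x' y' r' \<longleftrightarrow>
     (\<exists>x'' y'' r'' :: nat \<Rightarrow> real.
        (\<forall>(i,j)\<in>E. (x i - x j) * (x'' i - x'' j) + (y i - y j) * (y'' i - y'' j)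
                     - (r i + r j) * (r'' i + r'' j)
                   = (r' i + r' j)^2 - ((x' i - x' j)^2 + (y' i - y' j)^2)) \<and>
        (\<forall>i\<in>mod_Vp Vp r'. r'' i \<ge> 0) \<and> (\<forall>i\<in>mod_Vm Vm r'. r'' i \<le> 0) \<and>
        (\<forall>i\<in>mod_Veq Veq. r'' i = 0))"

definition equilibrium_stress :: "nat \<Rightarrow> (nat \<times> nat) set \<Rightarrow> (nat \<Rightarrow> real) \<Rightarrow> (nat \<Rightarrow> real)
    \<Rightarrow> (nat \<times> nat \<Rightarrow> real) \<Rightarrow> bool" where
  "equilibrium_stress n E x y \<omega> \<longleftrightarrow>
     (\<forall>i\<in>{1..n}. (\<Sum>j\<in>nbrs E i. wt E \<omega> i j * (x i - x j)) = 0 \<and>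
                 (\<Sum>j\<in>nbrs E i. wt E \<omega> i j * (y i - y j)) = 0)"

definition radial_force :: "(nat \<times> nat) set \<Rightarrow> (nat \<Rightarrow> real) \<Rightarrow> (nat \<times> nat \<Rightarrow> real) \<Rightarrow> nat \<Rightarrow> real" where
  "radial_force E r \<omega> i = (\<Sum>j\<in>nbrs E i. wt E \<omega> i j * (r i + r j))"

end

theory Submission
  imports Defs
begin

text \<open>Pair the defining equations of an extension \<open>p''\<close> with the stress \<open>\<omega>\<close> and sum over
the edges. By the equilibrium condition the positional terms cancel (virtual work), so the
left-hand side collapses to \<open>-\<Sum>\<^sub>i r''\<^sub>i \<omega>\<^sub>i\<close>, which the sign conditions on \<open>r''\<close> and on the
radial force sums make nonnegative; the right-hand side is minus the positive energy of \<open>p'\<close>.\<close>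

lemma simple_graph_finite:
  assumes "simple_graph n E"
  shows "finite E"
  using assms finite_subset unfolding simple_graph_def by blast

lemma finite_nbrs:
  assumes "finite E"
  shows "finite (nbrs E i)"
proof -
  have "nbrs E i \<subseteq> fst ` E \<union> snd ` E" unfolding nbrs_def by force
  then show ?thesis using assms finite_subset by blast
qed

lemma wt_edge:
  assumes "simple_graph n E" and "(i,j) \<in> E"
  shows "wt E \<omega> i j = \<omega> (i,j)" and "wt E \<omega> j i = \<omega> (i,j)"
  using assms unfolding simple_graph_def wt_def by auto

lemma sum_nbrs_eq_sum_edges:
  assumes sg: "simple_graph n E"
  shows "(\<Sum>i\<in>{1..n}. \<Sum>j\<in>nbrs E i. h i j) = (\<Sum>(i,j)\<in>E. h i j + h j i)"
proof -
  have Esub: "E \<subseteq> {1..n} \<times> {1..n}" and antisym: "\<And>i j. (i,j) \<in> E \<Longrightarrow> (j,i) \<notin> E"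
    using sg unfolding simple_graph_def by auto
  have fin: "finite E" using sg by (rule simple_graph_finite)
  have "(\<Sum>i\<in>{1..n}. \<Sum>j\<in>nbrs E i. h i j) = (\<Sum>(i,j)\<in>Sigma {1..n} (nbrs E). h i j)"
    by (rule sum.Sigma) (auto simp: finite_nbrs fin)
  also have "Sigma {1..n} (nbrs E) = E \<union> prod.swap ` E"
    using Esub unfolding nbrs_def by force
  also have "(\<Sum>(i,j)\<in>E \<union> prod.swap ` E. h i j)
      = (\<Sum>(i,j)\<in>E. h i j) + (\<Sum>(i,j)\<in>prod.swap ` E. h i j)"
    by (rule sum.union_disjoint) (use fin antisym in auto)
  also have "(\<Sum>(i,j)\<in>prod.swap ` E. h i j) = (\<Sum>(i,j)\<in>E. h j i)"
    by (subst sum.reindex) (auto simp: case_prod_beta)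
  finally show ?thesis by (simp add: sum.distrib case_prod_beta)
qed

lemma equilibrium_stress_virtual_work:
  assumes sg: "simple_graph n E" and eq: "equilibrium_stress n E x y \<omega>"
  shows "(\<Sum>(i,j)\<in>E. \<omega> (i,j) * ((x i - x j) * (u i - u j) + (y i - y j) * (v i - v j)
                                 - (r i + r j) * (s i + s j)))
       = - (\<Sum>i\<in>{1..n}. s i * radial_force E r \<omega> i)"
proof -
  define h where "h i j = wt E \<omega> i j * ((x i - x j) * u i + (y i - y j) * v i - (r i + r j) * s i)"
    for i j
  have "(\<Sum>(i,j)\<in>E. \<omega> (i,j) * ((x i - x j) * (u i - u j) + (y i - y j) * (v i - v j)
                                 - (r i + r j) * (s i + s j)))
      = (\<Sum>(i,j)\<in>E. h i j + h j i)"
    by (rule sum.cong) (auto simp: h_def wt_edge[OF sg] algebra_simps)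
  also have "\<dots> = (\<Sum>i\<in>{1..n}. \<Sum>j\<in>nbrs E i. h i j)"
    by (rule sum_nbrs_eq_sum_edges[OF sg, symmetric])
  also have "\<dots> = (\<Sum>i\<in>{1..n}. u i * (\<Sum>j\<in>nbrs E i. wt E \<omega> i j * (x i - x j))
                           + v i * (\<Sum>j\<in>nbrs E i. wt E \<omega> i j * (y i - y j))
                           - s i * radial_force E r \<omega> i)"
    unfolding h_def radial_force_def
    by (simp add: sum_distrib_left sum.distrib sum_subtractf algebra_simps)
  also have "\<dots> = - (\<Sum>i\<in>{1..n}. s i * radial_force E r \<omega> i)"
    using eq unfolding equilibrium_stress_def by (simp add: sum_negf)
  finally show ?thesis .
qed

lemma sum_mod_partition_nonpos:
  fixes s f :: "nat \<Rightarrow> real"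
  assumes "\<forall>i\<in>mod_Vp Vp r'. s i \<ge> 0" and "\<forall>i\<in>mod_Vm Vm r'. s i \<le> 0"
    and "\<forall>i\<in>mod_Veq Veq. s i = 0"
    and "\<forall>i\<in>mod_Vm Vm r'. f i \<ge> 0" and "\<forall>i\<in>mod_Vp Vp r'. f i \<le> 0"
    and "\<forall>i\<in>mod_V0 n Vp Vm Veq r'. f i = 0"
  shows "(\<Sum>i\<in>{1..n}. s i * f i) \<le> 0"
proof (rule sum_nonpos)
  fix i assume "i \<in> {1..n}"
  then consider "i \<in> mod_V0 n Vp Vm Veq r'" | "i \<in> mod_Vp Vp r'" | "i \<in> mod_Vm Vm r'"
    | "i \<in> mod_Veq Veq"
    unfolding mod_V0_def by blast
  then show "s i * f i \<le> 0"
    by cases (use assms in \<open>auto intro: mult_nonneg_nonpos mult_nonpos_nonneg\<close>)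
qed

theorem mainTheorem7:
  fixes n :: nat and E :: "(nat \<times> nat) set" and rot :: "nat \<Rightarrow> nat list"
    and x y r x' y' r' :: "nat \<Rightarrow> real" and \<omega> :: "nat \<times> nat \<Rightarrow> real"
    and Vp Vm Veq V0 :: "nat set"
  assumes "planar_embedded n E rot"
    and "is_packing n E rot x y r"
    and "is_partition n Vp Vm Veq V0"
    and "proper_flex E Vp Vm Veq x y r x' y' r'"
    and "equilibrium_stress n E x y \<omega>"
    and "\<forall>i\<in>mod_Vm Vm r'. radial_force E r \<omega> i \<ge> 0"
    and "\<forall>i\<in>mod_Vp Vp r'. radial_force E r \<omega> i \<le> 0"
    and "\<forall>i\<in>mod_V0 n Vp Vm Veq r'. radial_force E r \<omega> i = 0"
    and "(\<Sum>(i,j)\<in>E. \<omega> (i,j) * (((x' i - x' j)^2 + (y' i - y' j)^2) - (r' i + r' j)^2)) > 0"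
  shows "\<not> extendable E Vp Vm Veq x y r x' y' r'"
proof
  assume "extendable E Vp Vm Veq x y r x' y' r'"
  then obtain x'' y'' r'' where
    second_order: "\<forall>(i,j)\<in>E. (x i - x j) * (x'' i - x'' j) + (y i - y j) * (y'' i - y'' j)
                     - (r i + r j) * (r'' i + r'' j)
                   = (r' i + r' j)^2 - ((x' i - x' j)^2 + (y' i - y' j)^2)" and
    signs: "\<forall>i\<in>mod_Vp Vp r'. r'' i \<ge> 0" "\<forall>i\<in>mod_Vm Vm r'. r'' i \<le> 0"
      "\<forall>i\<in>mod_Veq Veq. r'' i = 0"
    unfolding extendable_def by blast
  have sg: "simple_graph n E" using assms(1) unfolding planar_embedded_def by simp
  have "- (\<Sum>i\<in>{1..n}. r'' i * radial_force E r \<omega> i)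
      = (\<Sum>(i,j)\<in>E. \<omega> (i,j) * ((r' i + r' j)^2 - ((x' i - x' j)^2 + (y' i - y' j)^2)))"
    unfolding equilibrium_stress_virtual_work[OF sg assms(5), where u = x'' and v = y'', symmetric]
    using second_order by (intro sum.cong) auto
  also have "\<dots> = - (\<Sum>(i,j)\<in>E. \<omega> (i,j) * (((x' i - x' j)^2 + (y' i - y' j)^2) - (r' i + r' j)^2))"
    by (simp add: sum_negf[symmetric] case_prod_beta algebra_simps)
  finally have "(\<Sum>i\<in>{1..n}. r'' i * radial_force E r \<omega> i) > 0"
    using assms(9) by simp
  moreover have "(\<Sum>i\<in>{1..n}. r'' i * radial_force E r \<omega> i) \<le> 0"
    using signs assms(6-8) by (rule sum_mod_partition_nonpos)
  ultimately show False by simp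
qed

end
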